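(* Let $G$ be a nonempty countable graph not containing $K_\omega$ as a subgraph. Then the graph $K_\omega^{<{\rm rk}(G)+1>}$ admits no homomorphism into $G$.
   Context: All graphs are simple and loopless; homomorphisms are edge-preserving vertex maps. $K_n$ is the complete graph on $\{0,\dots,n-1\}$, $K_\omega$ the countably infinite complete graph. For a graph $G$ not containing $K_\omega$, $T^G$ is the set of all homomorphisms $K_n\to G$, $n\ge 1$, ordered by extension; ${\rm rk}(f)=\sup\{{\rm rk}(g)+1: g \text{ immediate successor of } f\}$ and ${\rm rk}(G)=\sup\{{\rm rk}(f)+1: f \text{ minimal in } T^G\}$. For an ordinal $\alpha$, $K_\omega^{<\alpha>}$ is the graph whose vertices are all finite strictly decreasing sequences of ordinals $<\alpha$ (including the empty sequence), two distinct sequences being adjacent iff one is an initial segment of the other. *)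

theory Defs
  imports Main "HOL-Library.Sublist" "HOL-Library.Countable_Set"
begin

definition simple_graph :: "'v set \<Rightarrow> ('v \<Rightarrow> 'v \<Rightarrow> bool) \<Rightarrow> bool" where
  "simple_graph V E \<longleftrightarrow> (\<forall>x y. E x y \<longrightarrow> x \<in> V \<and> y \<in> V \<and> x \<noteq> y \<and> E y x)"

text \<open>G contains K_omega as a subgraph (equivalently: there is a homomorphism K_omega -> G,
  which is automatically injective since graphs are loopless).\<close>
definition contains_Komega :: "'v set \<Rightarrow> ('v \<Rightarrow> 'v \<Rightarrow> bool) \<Rightarrow> bool" where
  "contains_Komega V E \<longleftrightarrow>
     (\<exists>f :: nat \<Rightarrow> 'v. inj f \<and> range f \<subseteq> V \<and> (\<forall>i j. i \<noteq> j \<longrightarrow> E (f i) (f j)))"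

text \<open>T^G: homomorphisms K_n -> G (n >= 1), represented as the list [f 0, ..., f (n-1)].\<close>
definition homK :: "'v set \<Rightarrow> ('v \<Rightarrow> 'v \<Rightarrow> bool) \<Rightarrow> 'v list set" where
  "homK V E = {xs. length xs \<ge> 1 \<and> set xs \<subseteq> V \<and>
      (\<forall>i<length xs. \<forall>j<length xs. i \<noteq> j \<longrightarrow> E (xs ! i) (xs ! j))}"

definition imm_succ :: "'v set \<Rightarrow> ('v \<Rightarrow> 'v \<Rightarrow> bool) \<Rightarrow> 'v list \<Rightarrow> 'v list set" where
  "imm_succ V E f = {g \<in> homK V E. prefix f g \<and> length g = Suc (length f)}"

text \<open>Ordinals are measured inside a well-order w (its initial segments are the ordinals).
  x is the least element of Field w strictly above every element of A, i.e. sup {a+1 : a in A}.\<close>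
definition strict_ub :: "'o rel \<Rightarrow> 'o set \<Rightarrow> 'o \<Rightarrow> bool" where
  "strict_ub w A x \<longleftrightarrow> x \<in> Field w \<and> (\<forall>a\<in>A. a \<noteq> x \<and> (a, x) \<in> w)"

definition least_strict_ub :: "'o rel \<Rightarrow> 'o set \<Rightarrow> 'o \<Rightarrow> bool" where
  "least_strict_ub w A x \<longleftrightarrow> strict_ub w A x \<and> (\<forall>y. strict_ub w A y \<longrightarrow> (x, y) \<in> w)"

definition is_rank_fn :: "'v set \<Rightarrow> ('v \<Rightarrow> 'v \<Rightarrow> bool) \<Rightarrow> 'o rel \<Rightarrow> ('v list \<Rightarrow> 'o) \<Rightarrow> bool" where
  "is_rank_fn V E w \<rho> \<longleftrightarrow>
     (\<forall>f \<in> homK V E. least_strict_ub w (\<rho> ` imm_succ V E f) (\<rho> f))"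

text \<open>beta represents rk(G) = sup { rk(f)+1 : f minimal in T^G } in w;
  the minimal elements of T^G are the homomorphisms from K_1.\<close>
definition is_graph_rank :: "'v set \<Rightarrow> ('v \<Rightarrow> 'v \<Rightarrow> bool) \<Rightarrow> 'o rel \<Rightarrow> ('v list \<Rightarrow> 'o) \<Rightarrow> 'o \<Rightarrow> bool" where
  "is_graph_rank V E w \<rho> \<beta> \<longleftrightarrow>
     least_strict_ub w (\<rho> ` {f \<in> homK V E. length f = 1}) \<beta>"

text \<open>K_omega^{<beta+1>}: finite strictly decreasing sequences of ordinals <= beta
  (i.e. elements of Field w that are w-below-or-equal beta), adjacency = proper
  initial segment relation.\<close>
definition Kseq_vert :: "'o rel \<Rightarrow> 'o \<Rightarrow> 'o list set" where
  "Kseq_vert w \<beta> = {s. (\<forall>x\<in>set s. (x, \<beta>) \<in> w) \<and>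
       sorted_wrt (\<lambda>a b. (b, a) \<in> w \<and> a \<noteq> b) s}"

definition Kseq_adj :: "'o list \<Rightarrow> 'o list \<Rightarrow> bool" where
  "Kseq_adj s t \<longleftrightarrow> s \<noteq> t \<and> (prefix s t \<or> prefix t s)"

definition graph_hom :: "'a set \<Rightarrow> ('a \<Rightarrow> 'a \<Rightarrow> bool) \<Rightarrow> 'v set \<Rightarrow> ('v \<Rightarrow> 'v \<Rightarrow> bool) \<Rightarrow> ('a \<Rightarrow> 'v) \<Rightarrow> bool" where
  "graph_hom A R V E h \<longleftrightarrow> (\<forall>x\<in>A. h x \<in> V) \<and> (\<forall>x\<in>A. \<forall>y\<in>A. R x y \<longrightarrow> E (h x) (h y))"

end

theory Submission
  imports Defs
begin

text \<open>Let \<open>h\<close> be a homomorphism from \<open>K\<^sub>\<omega>\<close>\<open><\<beta>+1>\<close> into \<open>G\<close>. The initial segments of a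
  vertex \<open>s\<close> form a clique, so their images form an element of \<open>T\<^sup>G\<close> of length \<open>|s| + 1\<close>. If its rank
  were some \<open>\<alpha> \<le> \<beta>\<close> strictly below every entry of \<open>s\<close>, then \<open>s\<close> extended by \<open>\<alpha>\<close> would again be
  a vertex, whose element of \<open>T\<^sup>G\<close> is an immediate successor of that of \<open>s\<close> and so has a rank
  \<open>\<gamma> < \<alpha>\<close> strictly below every entry of the extension. Well-founded induction on \<open>\<alpha>\<close> rules this
  out; for the empty sequence it contradicts \<open>rk(h []) < rk(G) = \<beta>\<close>.
  The hypotheses on \<open>G\<close> only serve to make the rank function exist, which is assumed here.\<close>

definition prefix_clique :: "('o list \<Rightarrow> 'v) \<Rightarrow> 'o list \<Rightarrow> 'v list" where
  "prefix_clique h s = map (\<lambda>i. h (take i s)) [0..<Suc (length s)]"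

lemma prefix_clique_snoc: "prefix_clique h (s @ [a]) = prefix_clique h s @ [h (s @ [a])]"
  unfolding prefix_clique_def by simp

lemma length_prefix_clique [simp]: "length (prefix_clique h s) = Suc (length s)"
  unfolding prefix_clique_def by simp

lemma Kseq_vert_take: "s \<in> Kseq_vert w \<beta> \<Longrightarrow> take i s \<in> Kseq_vert w \<beta>"
  unfolding Kseq_vert_def using set_take_subset[of i s] sorted_wrt_take by blast

lemma Kseq_vert_snoc:
  assumes "s \<in> Kseq_vert w \<beta>" and "(\<alpha>, \<beta>) \<in> w" and "\<forall>x\<in>set s. (\<alpha>, x) \<in> w - Id"
  shows "s @ [\<alpha>] \<in> Kseq_vert w \<beta>"
  using assms unfolding Kseq_vert_def by (auto simp: sorted_wrt_append)

lemma Kseq_adj_take: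
  assumes "i \<le> length s" and "j \<le> length s" and "i \<noteq> j"
  shows "Kseq_adj (take i s) (take j s)"
proof -
  have "take i s \<noteq> take j s"
    using assms by (metis length_take min.absorb2)
  moreover have "prefix (take k s) (take l s)" if "k \<le> l" for k l
    using that by (metis min.absorb1 take_is_prefix take_take)
  then have "prefix (take i s) (take j s) \<or> prefix (take j s) (take i s)"
    by (meson nle_le)
  ultimately show ?thesis unfolding Kseq_adj_def by blast
qed

lemma prefix_clique_in_homK:
  assumes hom: "graph_hom (Kseq_vert w \<beta>) Kseq_adj V E h" and s: "s \<in> Kseq_vert w \<beta>"
  shows "prefix_clique h s \<in> homK V E"
proof -
  have "set (prefix_clique h s) \<subseteq> V"
    using hom s Kseq_vert_take[OF s] unfolding prefix_clique_def graph_hom_def by auto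
  moreover have "E (prefix_clique h s ! i) (prefix_clique h s ! j)"
    if "i < length (prefix_clique h s)" "j < length (prefix_clique h s)" "i \<noteq> j" for i j
  proof -
    have "E (h (take i s)) (h (take j s))"
      using hom Kseq_vert_take[OF s] Kseq_adj_take[of i s j] that
      unfolding graph_hom_def by auto
    then show ?thesis
      using that unfolding prefix_clique_def by (simp del: upt_Suc add: nth_map_upt)
  qed
  moreover have "length (prefix_clique h s) \<ge> 1" by simp
  ultimately show ?thesis unfolding homK_def by blast
qed

lemma prefix_clique_imm_succ:
  assumes "graph_hom (Kseq_vert w \<beta>) Kseq_adj V E h" and "s @ [a] \<in> Kseq_vert w \<beta>"
  shows "prefix_clique h (s @ [a]) \<in> imm_succ V E (prefix_clique h s)"
  using prefix_clique_in_homK[OF assms] unfolding imm_succ_def prefix_clique_snoc by simp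

lemma is_rank_fn_imm_succ_less:
  assumes "is_rank_fn V E w \<rho>" and "f \<in> homK V E" and "g \<in> imm_succ V E f"
  shows "(\<rho> g, \<rho> f) \<in> w - Id"
  using assms unfolding is_rank_fn_def least_strict_ub_def strict_ub_def by blast

lemma is_graph_rank_less:
  assumes "is_graph_rank V E w \<rho> \<beta>" and "f \<in> homK V E" and "length f = 1"
  shows "(\<rho> f, \<beta>) \<in> w - Id"
  using assms unfolding is_graph_rank_def least_strict_ub_def strict_ub_def by blast

lemma rank_prefix_clique_not_below:
  assumes wo: "Well_order w" and rk: "is_rank_fn V E w \<rho>"
    and hom: "graph_hom (Kseq_vert w \<beta>) Kseq_adj V E h"
    and "s \<in> Kseq_vert w \<beta>" and "(\<alpha>, \<beta>) \<in> w" and "\<forall>x\<in>set s. (\<alpha>, x) \<in> w - Id"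
  shows "\<rho> (prefix_clique h s) \<noteq> \<alpha>"
proof -
  have wf: "wf (w - Id)"
    using wo by (simp add: well_order_on_def)
  have trans: "trans w" and strict_trans: "trans (w - Id)"
    using wo strict_linear_order_on_diff_Id[of "Field w" w]
    by (simp_all add: order_on_defs strict_linear_order_on_def)
  show ?thesis
    using assms(4-6)
  proof (induction \<alpha> arbitrary: s rule: wf_induct_rule[OF wf])
    case (1 \<alpha> s)
    note s = "1.prems"(1) and \<alpha>\<beta> = "1.prems"(2) and below = "1.prems"(3)
    show ?case
    proof
      assume \<alpha>: "\<rho> (prefix_clique h s) = \<alpha>"
      have s\<alpha>: "s @ [\<alpha>] \<in> Kseq_vert w \<beta>"
        using Kseq_vert_snoc[OF s \<alpha>\<beta> below] .
      define \<gamma> where "\<gamma> = \<rho> (prefix_clique h (s @ [\<alpha>]))"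
      have \<gamma>\<alpha>: "(\<gamma>, \<alpha>) \<in> w - Id"
        using is_rank_fn_imm_succ_less[OF rk prefix_clique_in_homK[OF hom s]
            prefix_clique_imm_succ[OF hom s\<alpha>]]
        unfolding \<gamma>_def \<alpha> .
      have "(\<gamma>, \<beta>) \<in> w"
        using \<gamma>\<alpha> \<alpha>\<beta> trans by (meson DiffD1 transE)
      moreover have "(\<gamma>, x) \<in> w - Id" if "x \<in> set (s @ [\<alpha>])" for x
      proof (cases "x = \<alpha>")
        case False
        then have "(\<alpha>, x) \<in> w - Id" using that below by simp
        then show ?thesis using transD[OF strict_trans \<gamma>\<alpha>] by blast
      qed (use \<gamma>\<alpha> in simp)
      ultimately show False
        using "1.IH"[OF \<gamma>\<alpha> s\<alpha>] \<gamma>_def by blast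
    qed
  qed
qed

theorem mainTheorem6:
  fixes V :: "'v set" and E :: "'v \<Rightarrow> 'v \<Rightarrow> bool"
    and w :: "'o rel" and \<rho> :: "'v list \<Rightarrow> 'o" and \<beta> :: 'o
  assumes "simple_graph V E"
    and "V \<noteq> {}"
    and "countable V"
    and "\<not> contains_Komega V E"
    and wo: "Well_order w"
    and rk: "is_rank_fn V E w \<rho>"
    and gr: "is_graph_rank V E w \<rho> \<beta>"
  shows "\<not> (\<exists>h :: 'o list \<Rightarrow> 'v. graph_hom (Kseq_vert w \<beta>) Kseq_adj V E h)"
proof
  assume "\<exists>h. graph_hom (Kseq_vert w \<beta>) Kseq_adj V E h"
  then obtain h where hom: "graph_hom (Kseq_vert w \<beta>) Kseq_adj V E h" by blast
  have empty: "[] \<in> Kseq_vert w \<beta>" by (simp add: Kseq_vert_def)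
  have "(\<rho> (prefix_clique h []), \<beta>) \<in> w"
    using is_graph_rank_less[OF gr prefix_clique_in_homK[OF hom empty]] by simp
  from rank_prefix_clique_not_below[OF wo rk hom empty this] show False
    by simp
qed

end
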